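(* Consider a single-antenna jammer ($I=1$) with a fixed (deterministic) transmit vector $\mathbf w_D\in\mathbb C^D$, so $\mathbf W_D=\mathbf w_D^{\mathrm T}$, and let $\mathbf S_D$ be uniformly distributed on $\mathcal S^{U\times D}$. Then the probability (over $\mathbf S_D$) that the jammer is eclipsed (with perfect CSI) is at most $$p_e(\mathbf w_D)=\begin{cases}1 & \text{if } \mathbf w_D=\mathbf 0,\\[2pt] 1-\Big(1-\dfrac{2^{\|\mathbf w_D\|_0}-1}{4^{\|\mathbf w_D\|_0-1}}\Big)^U & \text{otherwise,}\end{cases}$$ where $\|\mathbf w_D\|_0$ is the number of nonzero entries of $\mathbf w_D$.
   Context: Let $U,D$ be positive integers and $\mathcal S=\{(\pm1\pm i)/\sqrt2\}\subset\mathbb C$ (QPSK). Eclipsing with perfect CSI (single-antenna case): given $\mathbf S_D\in\mathcal S^{U\times D}$ and $\mathbf w_D\in\mathbb C^D$, the jammer is eclipsed if there exists $\tilde{\mathbf S}_D\in\mathcal S^{U\times D}\setminus\{\mathbf S_D\}$ such that the $(U+1)\times D$ matrix $\begin{bmatrix}\mathbf S_D-\tilde{\mathbf S}_D\\ \mathbf w_D^{\mathrm T}\end{bmatrix}$ has rank at most $1$. *)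

theory Defs
  imports "HOL-Analysis.Analysis"
begin

definition QPSK :: "complex set" where
  "QPSK = {(complex_of_real a + \<i> * complex_of_real b) / complex_of_real (sqrt 2) |
             a b. a \<in> {-1, 1} \<and> b \<in> {-1, 1}}"

definition QPSK_matrices :: "(complex^'d^'u) set" where
  "QPSK_matrices = {S. \<forall>u d. S $ u $ d \<in> QPSK}"

text \<open>The (U+1) x D matrix stacking S - S' on top of the row w^T
  (the extra row is indexed by None).\<close>
definition stack_row :: "complex^'d^'u \<Rightarrow> complex^'d \<Rightarrow> complex^'d^('u option)" where
  "stack_row M w = (\<chi> r. case r of None \<Rightarrow> w | Some u \<Rightarrow> M $ u)"

definition eclipsed :: "complex^'d^'u \<Rightarrow> complex^'d \<Rightarrow> bool" where
  "eclipsed S w \<longleftrightarrow>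
     (\<exists>S' \<in> QPSK_matrices - {S}. rank (stack_row (S - S') w) \<le> 1)"

definition l0 :: "complex^'d \<Rightarrow> nat" where
  "l0 w = card {i. w $ i \<noteq> 0}"

definition p_e :: "nat \<Rightarrow> complex^'d \<Rightarrow> real" where
  "p_e U w = (if w = 0 then 1
     else 1 - (1 - (2 ^ l0 w - 1) / 4 ^ (l0 w - 1)) ^ U)"

end

(*
  If the jammer is eclipsed, some row S_u differs from the corresponding row of another QPSK
  matrix by a nonzero multiple c w, so S_u is confusable along w. Since the rows of a uniform
  S are independent and uniform, the probability is at most 1 - (1 - q)^U, where q is the
  fraction of confusable rows; it remains to show q <= (2^k - 1) / 4^(k-1), k = ||w||_0.

  Distinct QPSK points differ either along an axis or along a diagonal, and for d <> 0 at most
  two points x of QPSK have x - d in QPSK, at most one if d is diagonal. Scale w so that one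
  entry is 1. If every nonzero entry w_j is a power of i, dividing the entries of a confusable
  row by w_j makes their real or their imaginary parts constant on the support of w; by
  inclusion-exclusion these are 4 * 2^k - 4 of the 4^k patterns on the support. Otherwise
  some nonzero entry w_j is not a power of i: then every admissible multiplier c puts a diagonal
  difference on the support, and comparing norms leaves at most four such c, which gives
  at most 2 * 2^k patterns.
*)
theory Submission
  imports Defs
begin

section \<open>Counting vectors\<close>

lemma card_le_2_if_subset_doubleton: "A \<subseteq> {x, y} \<Longrightarrow> card A \<le> 2"
  using card_mono[of "{x, y}" A] by (simp add: card_insert_if split: if_splits)

lemma card_Un_two_partitions:
  assumes "finite A1" "finite A2" "finite B1" "finite B2" "A1 \<inter> A2 = {}" "B1 \<inter> B2 = {}"
    and "card A1 = m" "card A2 = m" "card B1 = m" "card B2 = m"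
    and "card (A1 \<inter> B1) = n" "card (A1 \<inter> B2) = n" "card (A2 \<inter> B1) = n" "card (A2 \<inter> B2) = n"
  shows "card (A1 \<union> A2 \<union> B1 \<union> B2) = 4 * m - 4 * n"
proof -
  have "card (A1 \<union> A2) = 2 * m" "card (B1 \<union> B2) = 2 * m"
    using assms by (simp_all add: card_Un_disjoint)
  moreover have "card ((A1 \<union> A2) \<inter> (B1 \<union> B2)) = 4 * n"
  proof -
    have "(A1 \<union> A2) \<inter> (B1 \<union> B2) = ((A1 \<inter> B1) \<union> (A1 \<inter> B2)) \<union> ((A2 \<inter> B1) \<union> (A2 \<inter> B2))"
      by blast
    also have "card \<dots> = card ((A1 \<inter> B1) \<union> (A1 \<inter> B2)) + card ((A2 \<inter> B1) \<union> (A2 \<inter> B2))"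
      using assms(1-5) by (intro card_Un_disjoint) auto
    also have "\<dots> = 4 * n"
      using assms(1-4,6,11-14) by (simp add: card_Un_disjoint disjoint_iff)
    finally show ?thesis .
  qed
  moreover have "card (A1 \<union> A2) + card (B1 \<union> B2)
      = card (A1 \<union> A2 \<union> B1 \<union> B2) + card ((A1 \<union> A2) \<inter> (B1 \<union> B2))"
    using assms card_Un_Int[of "A1 \<union> A2" "B1 \<union> B2"] by (simp add: Un_assoc)
  ultimately show ?thesis
    by simp
qed

lemma bij_betw_vec_nth_vectors:
  "bij_betw vec_nth {x :: 'a^'n. \<forall>i. x $ i \<in> F i} (PiE UNIV F)"
  by (intro bij_betwI[of _ _ _ vec_lambda]) (auto simp: vec_eq_iff)

lemma finite_vectors:
  "(\<And>i. finite (F i)) \<Longrightarrow> finite {x :: 'a^'n. \<forall>i. x $ i \<in> F i}"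
  by (simp add: bij_betw_finite[OF bij_betw_vec_nth_vectors] finite_PiE)

lemma card_vectors: "card {x :: 'a^'n. \<forall>i. x $ i \<in> F i} = (\<Prod>i\<in>UNIV. card (F i))"
  by (simp add: bij_betw_same_card[OF bij_betw_vec_nth_vectors] card_PiE)

lemma card_vectors_with_component:
  fixes P :: "'a \<Rightarrow> bool"
  assumes "finite R"
  shows "card {x :: 'a^'n. (\<forall>i. x $ i \<in> R) \<and> (\<exists>i. P (x $ i))}
    = card R ^ CARD('n) - card {r \<in> R. \<not> P r} ^ CARD('n)"
proof -
  define A where "A = {x :: 'a^'n. \<forall>i. x $ i \<in> R}"
  define B where "B = {x :: 'a^'n. \<forall>i. x $ i \<in> {r \<in> R. \<not> P r}}"
  have "{x :: 'a^'n. (\<forall>i. x $ i \<in> R) \<and> (\<exists>i. P (x $ i))} = A - B"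
    by (auto simp: A_def B_def)
  moreover have "B \<subseteq> A" "finite A"
    using assms by (auto simp: A_def B_def intro: finite_vectors)
  moreover have "card A = card R ^ CARD('n)" "card B = card {r \<in> R. \<not> P r} ^ CARD('n)"
    unfolding A_def B_def card_vectors by simp_all
  ultimately show ?thesis
    by (simp add: card_Diff_subset finite_subset)
qed

lemma fraction_vectors_with_component:
  fixes P :: "'a \<Rightarrow> bool"
  assumes "finite R" "R \<noteq> {}"
  shows "real (card {x :: 'a^'n. (\<forall>i. x $ i \<in> R) \<and> (\<exists>i. P (x $ i))}) / real (card R ^ CARD('n))
    = 1 - (1 - real (card {r \<in> R. P r}) / real (card R)) ^ CARD('n)"
proof -
  let ?bad = "card {r \<in> R. P r}" and ?good = "card {r \<in> R. \<not> P r}" and ?n = "CARD('n)"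
  have "card R > 0"
    using assms by (simp add: card_gt_0_iff)
  have "?good = card R - ?bad"
    using assms(1) by (subst card_Diff_subset[symmetric]) (auto intro: arg_cong[where f = card])
  then have good_fraction: "real ?good / real (card R) = 1 - real ?bad / real (card R)"
    using \<open>card R > 0\<close> card_mono[OF assms(1), of "{r \<in> R. P r}"]
    by (simp add: of_nat_diff diff_divide_distrib)
  have "?good ^ ?n \<le> card R ^ ?n"
    using assms(1) by (intro power_mono card_mono) auto
  then have "real (card {x :: 'a^'n. (\<forall>i. x $ i \<in> R) \<and> (\<exists>i. P (x $ i))}) / real (card R ^ ?n)
      = (real (card R) ^ ?n - real ?good ^ ?n) / real (card R) ^ ?n"
    by (simp add: card_vectors_with_component[OF assms(1)] of_nat_diff)
  also have "\<dots> = 1 - (real ?good / real (card R)) ^ ?n"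
    using \<open>card R > 0\<close> by (simp add: diff_divide_distrib power_divide)
  finally show ?thesis
    unfolding good_fraction .
qed

lemma prod_if_zero_component:
  fixes w :: "complex^'d"
  shows "(\<Prod>j\<in>UNIV. if w $ j = 0 then a else b) = a ^ (CARD('d) - l0 w) * (b :: 'a :: comm_monoid_mult) ^ l0 w"
proof -
  have "{j. w $ j = 0} = UNIV - {j. w $ j \<noteq> 0}"
    by auto
  then have "card {j. w $ j = 0} = CARD('d) - l0 w"
    by (simp add: card_Diff_subset l0_def)
  then show ?thesis
    by (simp add: prod.If_cases Compl_eq l0_def)
qed

lemma l0_pos: "w \<noteq> 0 \<Longrightarrow> l0 w > 0"
  unfolding l0_def by (auto simp: vec_eq_iff card_gt_0_iff)

lemma l0_le_CARD: "l0 (w :: complex^'d) \<le> CARD('d)"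
  unfolding l0_def by (rule card_mono) auto

lemma l0_smult: "c \<noteq> 0 \<Longrightarrow> l0 (c *s w) = l0 w"
  by (simp add: l0_def)

section \<open>The QPSK constellation\<close>

definition qpsk_amp :: real where "qpsk_amp = 1 / sqrt 2"

lemma qpsk_amp_pos: "qpsk_amp > 0"
  by (simp add: qpsk_amp_def)

lemma qpsk_amp_sq: "qpsk_amp\<^sup>2 = 1 / 2"
  by (simp add: qpsk_amp_def power_divide)

lemma QPSK_eq: "QPSK = {Complex qpsk_amp qpsk_amp, Complex qpsk_amp (-qpsk_amp),
    Complex (-qpsk_amp) qpsk_amp, Complex (-qpsk_amp) (-qpsk_amp)}"
proof -
  have "(complex_of_real a + \<i> * complex_of_real b) / complex_of_real (sqrt 2)
      = Complex (a * qpsk_amp) (b * qpsk_amp)" for a b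
    by (simp add: complex_eq_iff qpsk_amp_def)
  then have "QPSK = {Complex (a * qpsk_amp) (b * qpsk_amp) |a b. a \<in> {-1, 1} \<and> b \<in> {-1, 1}}"
    unfolding QPSK_def by presburger
  also have "\<dots> = {Complex (1 * qpsk_amp) (1 * qpsk_amp), Complex (1 * qpsk_amp) (-1 * qpsk_amp),
      Complex (-1 * qpsk_amp) (1 * qpsk_amp), Complex (-1 * qpsk_amp) (-1 * qpsk_amp)}"
    by blast
  finally show ?thesis
    by simp
qed

lemma QPSK_iff: "q \<in> QPSK \<longleftrightarrow> Re q \<in> {-qpsk_amp, qpsk_amp} \<and> Im q \<in> {-qpsk_amp, qpsk_amp}"
  by (auto simp: QPSK_eq complex_eq_iff)

lemma finite_QPSK: "finite QPSK"
  by (simp add: QPSK_eq)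

lemma card_QPSK: "card QPSK = 4"
  using qpsk_amp_pos by (simp add: QPSK_eq complex_eq_iff)

definition gauss_units :: "complex set" where "gauss_units = {1, \<i>, -1, -\<i>}"

lemma card_gauss_units: "card gauss_units = 4"
  by (simp add: gauss_units_def complex_eq_iff)

lemma finite_gauss_units: "finite gauss_units"
  by (simp add: gauss_units_def)

lemma gauss_units_nonzero: "u \<in> gauss_units \<Longrightarrow> u \<noteq> 0"
  by (auto simp: gauss_units_def)

lemma gauss_units_divide: "u \<in> gauss_units \<Longrightarrow> v \<in> gauss_units \<Longrightarrow> v / u \<in> gauss_units"
  by (auto simp: gauss_units_def)

lemma divide_scaled_gauss_units:
  assumes "c \<noteq> 0" "\<delta> \<in> (\<lambda>u. c * u) ` gauss_units" "\<delta>' \<in> (\<lambda>u. c * u) ` gauss_units"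
  shows "\<delta>' / \<delta> \<in> gauss_units"
proof -
  obtain u u' where "u \<in> gauss_units" "u' \<in> gauss_units" "\<delta> = c * u" "\<delta>' = c * u'"
    using assms(2,3) by blast
  then show ?thesis
    using assms(1) gauss_units_divide by simp
qed

lemma mult_gauss_unit_QPSK_iff: "u \<in> gauss_units \<Longrightarrow> z * u \<in> QPSK \<longleftrightarrow> z \<in> QPSK"
  by (auto simp: gauss_units_def QPSK_iff)

lemma divide_gauss_unit_QPSK_iff: "u \<in> gauss_units \<Longrightarrow> z / u \<in> QPSK \<longleftrightarrow> z \<in> QPSK"
  by (auto simp: gauss_units_def QPSK_iff)

lemma card_QPSK_rotate:
  assumes "u \<in> gauss_units"
  shows "card {q \<in> QPSK. P (q / u)} = card {z \<in> QPSK. P z}"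
proof -
  have "{q \<in> QPSK. P (q / u)} = (\<lambda>z. z * u) ` {z \<in> QPSK. P z}"
  proof (intro equalityI subsetI)
    fix q
    assume "q \<in> {q \<in> QPSK. P (q / u)}"
    then show "q \<in> (\<lambda>z. z * u) ` {z \<in> QPSK. P z}"
      using assms gauss_units_nonzero[OF assms]
      by (intro image_eqI[of _ _ "q / u"]) (auto simp: divide_gauss_unit_QPSK_iff)
  qed (use assms gauss_units_nonzero[OF assms] in \<open>auto simp: mult_gauss_unit_QPSK_iff\<close>)
  moreover have "inj_on (\<lambda>z. z * u) {z \<in> QPSK. P z}"
    using gauss_units_nonzero[OF assms] by (auto intro: inj_onI)
  ultimately show ?thesis
    by (simp add: card_image)
qed

lemma card_QPSK_Re_eq: "x \<in> {-qpsk_amp, qpsk_amp} \<Longrightarrow> card {z \<in> QPSK. Re z = x} = 2"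
  and card_QPSK_Im_eq: "x \<in> {-qpsk_amp, qpsk_amp} \<Longrightarrow> card {z \<in> QPSK. Im z = x} = 2"
  and card_QPSK_Re_Im_eq: "x \<in> {-qpsk_amp, qpsk_amp} \<Longrightarrow> y \<in> {-qpsk_amp, qpsk_amp}
     \<Longrightarrow> card {z \<in> QPSK. Re z = x \<and> Im z = y} = 1"
proof -
  assume x: "x \<in> {-qpsk_amp, qpsk_amp}"
  have "{z \<in> QPSK. Re z = x} = {Complex x qpsk_amp, Complex x (-qpsk_amp)}"
    using x by (auto simp: QPSK_iff complex_eq_iff)
  then show "card {z \<in> QPSK. Re z = x} = 2"
    using qpsk_amp_pos by simp
  have "{z \<in> QPSK. Im z = x} = {Complex qpsk_amp x, Complex (-qpsk_amp) x}"
    using x by (auto simp: QPSK_iff complex_eq_iff)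
  then show "card {z \<in> QPSK. Im z = x} = 2"
    using qpsk_amp_pos by simp
  assume "y \<in> {-qpsk_amp, qpsk_amp}"
  then have "{z \<in> QPSK. Re z = x \<and> Im z = y} = {Complex x y}"
    using x by (auto simp: QPSK_iff complex_eq_iff)
  then show "card {z \<in> QPSK. Re z = x \<and> Im z = y} = 1"
    by simp
qed

definition QPSK_axis_diffs :: "complex set" where
  "QPSK_axis_diffs = (\<lambda>u. complex_of_real (2 * qpsk_amp) * u) ` gauss_units"

definition QPSK_diag_diffs :: "complex set" where
  "QPSK_diag_diffs = (\<lambda>u. complex_of_real (2 * qpsk_amp) * (1 + \<i>) * u) ` gauss_units"

lemma QPSK_axis_diffs_eq: "QPSK_axis_diffs = {Complex (2 * qpsk_amp) 0, Complex 0 (2 * qpsk_amp),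
    Complex (- 2 * qpsk_amp) 0, Complex 0 (- 2 * qpsk_amp)}"
  by (auto simp: QPSK_axis_diffs_def gauss_units_def complex_eq_iff)

lemma QPSK_diag_diffs_eq: "QPSK_diag_diffs = {Complex (2 * qpsk_amp) (2 * qpsk_amp),
    Complex (- 2 * qpsk_amp) (2 * qpsk_amp), Complex (- 2 * qpsk_amp) (- 2 * qpsk_amp),
    Complex (2 * qpsk_amp) (- 2 * qpsk_amp)}"
  by (auto simp: QPSK_diag_diffs_def gauss_units_def complex_eq_iff)

lemma finite_QPSK_axis_diffs: "finite QPSK_axis_diffs"
  and finite_QPSK_diag_diffs: "finite QPSK_diag_diffs"
  by (simp_all add: QPSK_axis_diffs_def QPSK_diag_diffs_def finite_gauss_units)

lemma card_QPSK_axis_diffs: "card QPSK_axis_diffs \<le> 4"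
  and card_QPSK_diag_diffs: "card QPSK_diag_diffs \<le> 4"
  unfolding QPSK_axis_diffs_def QPSK_diag_diffs_def
  using card_image_le[OF finite_gauss_units] card_gauss_units by metis+

lemma QPSK_diff_cases:
  assumes "q \<in> QPSK" "q' \<in> QPSK" "q \<noteq> q'"
  shows "q - q' \<in> QPSK_axis_diffs \<union> QPSK_diag_diffs"
proof -
  have "Re (q - q') \<in> {- 2 * qpsk_amp, 0, 2 * qpsk_amp}" "Im (q - q') \<in> {- 2 * qpsk_amp, 0, 2 * qpsk_amp}"
    using assms(1,2) by (auto simp: QPSK_iff)
  moreover have "q - q' \<noteq> 0"
    using assms(3) by simp
  ultimately show ?thesis
    unfolding QPSK_axis_diffs_eq QPSK_diag_diffs_eq by (auto simp: complex_eq_iff)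
qed

lemma norm_QPSK_axis_diff: "\<delta> \<in> QPSK_axis_diffs \<Longrightarrow> (norm \<delta>)\<^sup>2 = 2"
  by (auto simp: QPSK_axis_diffs_eq cmod_def power_mult_distrib qpsk_amp_sq)

lemma norm_QPSK_diag_diff: "\<delta> \<in> QPSK_diag_diffs \<Longrightarrow> (norm \<delta>)\<^sup>2 = 4"
  by (auto simp: QPSK_diag_diffs_eq cmod_def power_mult_distrib qpsk_amp_sq)

lemma QPSK_diag_diff_Re_Im_nonzero: "\<delta> \<in> QPSK_diag_diffs \<Longrightarrow> Re \<delta> \<noteq> 0 \<and> Im \<delta> \<noteq> 0"
  using qpsk_amp_pos by (auto simp: QPSK_diag_diffs_eq)

lemma QPSK_axis_diffs_divide: "\<delta> \<in> QPSK_axis_diffs \<Longrightarrow> \<delta>' \<in> QPSK_axis_diffs \<Longrightarrow> \<delta>' / \<delta> \<in> gauss_units"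
  unfolding QPSK_axis_diffs_def using qpsk_amp_pos by (intro divide_scaled_gauss_units) auto

lemma QPSK_diag_diffs_divide:
  assumes "\<delta> \<in> QPSK_diag_diffs" "\<delta>' \<in> QPSK_diag_diffs"
  shows "\<delta>' / \<delta> \<in> gauss_units"
proof (rule divide_scaled_gauss_units)
  show "complex_of_real (2 * qpsk_amp) * (1 + \<i>) \<noteq> 0"
    using qpsk_amp_pos by (simp add: complex_eq_iff)
qed (use assms in \<open>simp_all add: QPSK_diag_diffs_def\<close>)

lemma QPSK_diff_mult_non_unit:
  assumes "\<delta> \<in> QPSK_axis_diffs \<union> QPSK_diag_diffs" "\<delta> * z \<in> QPSK_axis_diffs \<union> QPSK_diag_diffs"
    and "z \<notin> gauss_units"
  shows "\<delta> \<in> QPSK_axis_diffs \<and> \<delta> * z \<in> QPSK_diag_diffs \<or> \<delta> \<in> QPSK_diag_diffs \<and> \<delta> * z \<in> QPSK_axis_diffs"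
proof -
  have "\<delta> \<noteq> 0"
    using assms(1) norm_QPSK_axis_diff norm_QPSK_diag_diff by force
  then have "(\<delta> * z) / \<delta> \<notin> gauss_units"
    using assms(3) by simp
  then show ?thesis
    using assms(1,2) QPSK_axis_diffs_divide QPSK_diag_diffs_divide by blast
qed

lemma QPSK_shift_Re_eq_half:
  assumes "q \<in> QPSK" "q - v \<in> QPSK" "Re v \<noteq> 0"
  shows "Re q = Re v / 2"
  using assms by (auto simp: QPSK_iff)

lemma QPSK_shift_Im_eq_half:
  assumes "q \<in> QPSK" "q - v \<in> QPSK" "Im v \<noteq> 0"
  shows "Im q = Im v / 2"
  using assms by (auto simp: QPSK_iff)

lemma card_QPSK_shift_le_2:
  assumes "v \<noteq> 0"
  shows "card {q \<in> QPSK. q - v \<in> QPSK} \<le> 2"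
proof (cases "Re v = 0")
  case False
  have "{q \<in> QPSK. q - v \<in> QPSK} \<subseteq> {Complex (Re v / 2) qpsk_amp, Complex (Re v / 2) (- qpsk_amp)}"
  proof
    fix q
    assume q: "q \<in> {q \<in> QPSK. q - v \<in> QPSK}"
    with False have "Re q = Re v / 2"
      by (intro QPSK_shift_Re_eq_half) auto
    with q show "q \<in> {Complex (Re v / 2) qpsk_amp, Complex (Re v / 2) (- qpsk_amp)}"
      by (auto simp: QPSK_iff complex_eq_iff)
  qed
  then show ?thesis
    by (rule card_le_2_if_subset_doubleton)
next
  case True
  with assms have "Im v \<noteq> 0"
    by (simp add: complex_eq_iff)
  have "{q \<in> QPSK. q - v \<in> QPSK} \<subseteq> {Complex qpsk_amp (Im v / 2), Complex (- qpsk_amp) (Im v / 2)}"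
  proof
    fix q
    assume q: "q \<in> {q \<in> QPSK. q - v \<in> QPSK}"
    with \<open>Im v \<noteq> 0\<close> have "Im q = Im v / 2"
      by (intro QPSK_shift_Im_eq_half) auto
    with q show "q \<in> {Complex qpsk_amp (Im v / 2), Complex (- qpsk_amp) (Im v / 2)}"
      by (auto simp: QPSK_iff complex_eq_iff)
  qed
  then show ?thesis
    by (rule card_le_2_if_subset_doubleton)
qed

lemma card_QPSK_shift_le_1:
  assumes "Re v \<noteq> 0" "Im v \<noteq> 0"
  shows "card {q \<in> QPSK. q - v \<in> QPSK} \<le> 1"
proof -
  have "{q \<in> QPSK. q - v \<in> QPSK} \<subseteq> {Complex (Re v / 2) (Im v / 2)}"
  proof
    fix q
    assume "q \<in> {q \<in> QPSK. q - v \<in> QPSK}"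
    with assms have "Re q = Re v / 2" "Im q = Im v / 2"
      using QPSK_shift_Re_eq_half QPSK_shift_Im_eq_half by blast+
    then show "q \<in> {Complex (Re v / 2) (Im v / 2)}"
      by (simp add: complex_eq_iff)
  qed
  then show ?thesis
    using card_mono[of "{Complex (Re v / 2) (Im v / 2)}"] by simp
qed

section \<open>Rows confusable along a vector\<close>

definition QPSK_vectors :: "(complex^'d) set" where
  "QPSK_vectors = {r. \<forall>j. r $ j \<in> QPSK}"

lemma finite_QPSK_vectors: "finite QPSK_vectors"
  unfolding QPSK_vectors_def using finite_QPSK by (rule finite_vectors)

lemma card_QPSK_vectors: "card (QPSK_vectors :: (complex^'d) set) = 4 ^ CARD('d)"
  by (simp add: QPSK_vectors_def card_vectors card_QPSK)

definition confusable_row :: "complex^'d \<Rightarrow> complex^'d \<Rightarrow> bool" where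
  "confusable_row w r \<longleftrightarrow> (\<exists>c. c \<noteq> 0 \<and> r - c *s w \<in> QPSK_vectors)"

lemma confusable_row_smult: "c \<noteq> 0 \<Longrightarrow> confusable_row (c *s w) r \<longleftrightarrow> confusable_row w r"
  unfolding confusable_row_def
proof (intro iffI; elim exE conjE)
  fix c'
  assume "c \<noteq> 0" "c' \<noteq> 0" "r - c' *s (c *s w) \<in> QPSK_vectors"
  then show "\<exists>c. c \<noteq> 0 \<and> r - c *s w \<in> QPSK_vectors"
    by (intro exI[of _ "c' * c"]) (simp add: vector_smult_assoc)
next
  fix c'
  assume "c \<noteq> 0" "c' \<noteq> 0" "r - c' *s w \<in> QPSK_vectors"
  then show "\<exists>c'. c' \<noteq> 0 \<and> r - c' *s (c *s w) \<in> QPSK_vectors"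
    by (intro exI[of _ "c' / c"]) (simp add: vector_smult_assoc)
qed

definition QPSK_shift_set :: "complex^'d \<Rightarrow> (complex^'d) set" where
  "QPSK_shift_set v = {r \<in> QPSK_vectors. r - v \<in> QPSK_vectors}"

lemma confusable_rows_eq_Union:
  "{r \<in> QPSK_vectors. confusable_row w r} = (\<Union>c \<in> - {0}. QPSK_shift_set (c *s w))"
  by (auto simp: confusable_row_def QPSK_shift_set_def)

lemma QPSK_shift_set_component_diff:
  "r \<in> QPSK_shift_set v \<Longrightarrow> v $ j \<noteq> 0 \<Longrightarrow> v $ j \<in> QPSK_axis_diffs \<union> QPSK_diag_diffs"
  using QPSK_diff_cases[of "r $ j" "r $ j - v $ j"]
  by (auto simp: QPSK_shift_set_def QPSK_vectors_def)

lemma card_QPSK_shift_set_le: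
  fixes v :: "complex^'d"
  assumes "Re (v $ j') \<noteq> 0" "Im (v $ j') \<noteq> 0"
  shows "2 * card (QPSK_shift_set v) \<le> 4 ^ (CARD('d) - l0 v) * 2 ^ l0 v"
proof -
  define g where "g j = card {q \<in> QPSK. q - v $ j \<in> QPSK}" for j
  define h :: "'d \<Rightarrow> nat" where "h j = (if v $ j = 0 then 4 else 2)" for j
  have g_le_h: "g j \<le> h j" for j
    using card_QPSK_shift_le_2[of "v $ j"] card_QPSK by (simp add: g_def h_def)
  have "v $ j' \<noteq> 0"
    using assms(1) by auto
  then have "2 * g j' \<le> h j'"
    using card_QPSK_shift_le_1[OF assms] by (simp add: g_def h_def)
  have "QPSK_shift_set v = {r. \<forall>j. r $ j \<in> {q \<in> QPSK. q - v $ j \<in> QPSK}}"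
    by (auto simp: QPSK_shift_set_def QPSK_vectors_def)
  then have "card (QPSK_shift_set v) = (\<Prod>j\<in>UNIV. g j)"
    unfolding g_def by (simp only: card_vectors)
  then have "2 * card (QPSK_shift_set v) = 2 * g j' * (\<Prod>j\<in>UNIV - {j'}. g j)"
    by (simp add: prod.remove)
  also have "\<dots> \<le> h j' * (\<Prod>j\<in>UNIV - {j'}. h j)"
    using \<open>2 * g j' \<le> h j'\<close> g_le_h by (intro mult_mono prod_mono) auto
  also have "\<dots> = (\<Prod>j\<in>UNIV. h j)"
    by (simp add: prod.remove)
  also have "\<dots> = 4 ^ (CARD('d) - l0 v) * 2 ^ l0 v"
    unfolding h_def by (rule prod_if_zero_component)
  finally show ?thesis .
qed

definition rotated_QPSK_rows :: "complex^'d \<Rightarrow> (complex \<Rightarrow> bool) \<Rightarrow> (complex^'d) set" where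
  "rotated_QPSK_rows v P = {r. \<forall>j. r $ j \<in> QPSK \<and> (v $ j \<noteq> 0 \<longrightarrow> P (r $ j / v $ j))}"

lemma rotated_QPSK_rows_Int:
  "rotated_QPSK_rows v P \<inter> rotated_QPSK_rows v Q = rotated_QPSK_rows v (\<lambda>z. P z \<and> Q z)"
  by (auto simp: rotated_QPSK_rows_def)

lemma finite_rotated_QPSK_rows: "finite (rotated_QPSK_rows v P)"
  by (rule finite_subset[OF _ finite_QPSK_vectors]) (auto simp: rotated_QPSK_rows_def QPSK_vectors_def)

lemma card_rotated_QPSK_rows:
  fixes v :: "complex^'d"
  assumes "\<And>j. v $ j \<noteq> 0 \<Longrightarrow> v $ j \<in> gauss_units"
  shows "card (rotated_QPSK_rows v P) = 4 ^ (CARD('d) - l0 v) * card {z \<in> QPSK. P z} ^ l0 v"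
proof -
  have "rotated_QPSK_rows v P = {r. \<forall>j. r $ j \<in> (if v $ j = 0 then QPSK else {q \<in> QPSK. P (q / v $ j)})}"
    by (auto simp: rotated_QPSK_rows_def)
  then have "card (rotated_QPSK_rows v P)
      = (\<Prod>j\<in>UNIV. card (if v $ j = 0 then QPSK else {q \<in> QPSK. P (q / v $ j)}))"
    by (simp only: card_vectors)
  also have "\<dots> = (\<Prod>j\<in>UNIV. if v $ j = 0 then 4 else card {z \<in> QPSK. P z})"
    using assms by (intro prod.cong) (simp_all add: card_QPSK card_QPSK_rotate)
  also have "\<dots> = 4 ^ (CARD('d) - l0 v) * card {z \<in> QPSK. P z} ^ l0 v"
    by (rule prod_if_zero_component)
  finally show ?thesis .
qed

lemma QPSK_shift_divide_gauss_unit: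
  assumes "r \<in> QPSK_vectors" "r - c *s v \<in> QPSK_vectors" "v $ j \<in> gauss_units"
  shows "r $ j / v $ j \<in> QPSK" "r $ j / v $ j - c \<in> QPSK"
proof -
  have "r $ j / v $ j \<in> QPSK" "(r $ j - c * v $ j) / v $ j \<in> QPSK"
    using assms by (simp_all add: QPSK_vectors_def divide_gauss_unit_QPSK_iff)
  moreover have "(r $ j - c * v $ j) / v $ j = r $ j / v $ j - c"
    using gauss_units_nonzero[OF assms(3)] by (simp add: field_simps)
  ultimately show "r $ j / v $ j \<in> QPSK" "r $ j / v $ j - c \<in> QPSK"
    by simp_all
qed

lemma confusable_rows_subset_rotated:
  fixes v :: "complex^'d"
  assumes "v \<noteq> 0" and units: "\<And>j. v $ j \<noteq> 0 \<Longrightarrow> v $ j \<in> gauss_units"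
  shows "{r \<in> QPSK_vectors. confusable_row v r}
    \<subseteq> rotated_QPSK_rows v (\<lambda>z. Re z = qpsk_amp) \<union> rotated_QPSK_rows v (\<lambda>z. Re z = - qpsk_amp)
      \<union> rotated_QPSK_rows v (\<lambda>z. Im z = qpsk_amp) \<union> rotated_QPSK_rows v (\<lambda>z. Im z = - qpsk_amp)"
proof
  fix r
  assume "r \<in> {r \<in> QPSK_vectors. confusable_row v r}"
  then obtain c where "c \<noteq> 0" and r: "r \<in> QPSK_vectors" "r - c *s v \<in> QPSK_vectors"
    by (auto simp: confusable_row_def)
  \<comment> \<open>Dividing entry j by the unit v_j turns the shift c * v_j into the same c for every j.\<close>
  have rotated: "r $ j / v $ j \<in> QPSK" "r $ j / v $ j - c \<in> QPSK" if "v $ j \<noteq> 0" for j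
    using QPSK_shift_divide_gauss_unit[OF r units[OF that]] by simp_all
  obtain j0 where j0: "v $ j0 \<noteq> 0"
    using assms(1) by (auto simp: vec_eq_iff)
  consider "Re c \<noteq> 0" | "Im c \<noteq> 0"
    using \<open>c \<noteq> 0\<close> complex_eq_iff by force
  then show "r \<in> rotated_QPSK_rows v (\<lambda>z. Re z = qpsk_amp) \<union> rotated_QPSK_rows v (\<lambda>z. Re z = - qpsk_amp)
      \<union> rotated_QPSK_rows v (\<lambda>z. Im z = qpsk_amp) \<union> rotated_QPSK_rows v (\<lambda>z. Im z = - qpsk_amp)"
  proof cases
    case 1
    then have Re_eq: "Re (r $ j / v $ j) = Re c / 2" if "v $ j \<noteq> 0" for j
      using rotated[OF that] by (intro QPSK_shift_Re_eq_half)
    moreover have "Re c / 2 \<in> {- qpsk_amp, qpsk_amp}"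
      using Re_eq[OF j0] rotated(1)[OF j0] by (auto simp: QPSK_iff)
    ultimately show ?thesis
      using r(1) by (auto simp: rotated_QPSK_rows_def QPSK_vectors_def)
  next
    case 2
    then have Im_eq: "Im (r $ j / v $ j) = Im c / 2" if "v $ j \<noteq> 0" for j
      using rotated[OF that] by (intro QPSK_shift_Im_eq_half)
    moreover have "Im c / 2 \<in> {- qpsk_amp, qpsk_amp}"
      using Im_eq[OF j0] rotated(1)[OF j0] by (auto simp: QPSK_iff)
    ultimately show ?thesis
      using r(1) by (auto simp: rotated_QPSK_rows_def QPSK_vectors_def)
  qed
qed

lemma card_confusable_rows_aligned:
  fixes v :: "complex^'d"
  assumes "v \<noteq> 0" and units: "\<And>j. v $ j \<noteq> 0 \<Longrightarrow> v $ j \<in> gauss_units"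
  shows "card {r \<in> QPSK_vectors. confusable_row v r} \<le> 4 ^ (CARD('d) - l0 v) * (4 * 2 ^ l0 v - 4)"
proof -
  let ?A = "\<lambda>x. rotated_QPSK_rows v (\<lambda>z. Re z = x)" and ?B = "\<lambda>y. rotated_QPSK_rows v (\<lambda>z. Im z = y)"
  let ?a = qpsk_amp and ?H = "4 ^ (CARD('d) - l0 v)"
  have card_A_B: "card (?A x) = ?H * 2 ^ l0 v" "card (?B x) = ?H * 2 ^ l0 v" if "x \<in> {-?a, ?a}" for x
    using card_rotated_QPSK_rows[OF units] card_QPSK_Re_eq[OF that] card_QPSK_Im_eq[OF that] by simp_all
  have card_A_Int_B: "card (?A x \<inter> ?B y) = ?H" if "x \<in> {-?a, ?a}" "y \<in> {-?a, ?a}" for x y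
    using card_rotated_QPSK_rows[OF units] card_QPSK_Re_Im_eq[OF that] by (simp add: rotated_QPSK_rows_Int)
  obtain j0 where "v $ j0 \<noteq> 0"
    using assms(1) by (auto simp: vec_eq_iff)
  then have "?A ?a \<inter> ?A (-?a) = {}" "?B ?a \<inter> ?B (-?a) = {}"
    using qpsk_amp_pos by (auto simp: rotated_QPSK_rows_def)
  then have "card (?A ?a \<union> ?A (-?a) \<union> ?B ?a \<union> ?B (-?a)) = 4 * (?H * 2 ^ l0 v) - 4 * ?H"
    by (intro card_Un_two_partitions finite_rotated_QPSK_rows card_A_B card_A_Int_B) auto
  moreover have "card {r \<in> QPSK_vectors. confusable_row v r} \<le> card (?A ?a \<union> ?A (-?a) \<union> ?B ?a \<union> ?B (-?a))"
    using confusable_rows_subset_rotated[OF assms] by (intro card_mono) (simp_all add: finite_rotated_QPSK_rows)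
  ultimately show ?thesis
    by (simp add: algebra_simps)
qed

lemma misaligned_shift_multipliers:
  fixes v :: "complex^'d"
  assumes "v $ j0 = 1" "v $ j1 \<noteq> 0" "v $ j1 \<notin> gauss_units"
  defines "C \<equiv> {c. c \<noteq> 0 \<and> QPSK_shift_set (c *s v) \<noteq> {}}"
  shows "finite C" "card C \<le> 4" "\<And>c. c \<in> C \<Longrightarrow> \<exists>j. c * v $ j \<in> QPSK_diag_diffs"
proof -
  have diff: "c * v $ j \<in> QPSK_axis_diffs \<union> QPSK_diag_diffs" if "c \<in> C" "v $ j \<noteq> 0" for c j
    using that QPSK_shift_set_component_diff[of _ "c *s v" j] by (auto simp: C_def)
  have classes: "c \<in> QPSK_axis_diffs \<and> c * v $ j1 \<in> QPSK_diag_diffs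
      \<or> c \<in> QPSK_diag_diffs \<and> c * v $ j1 \<in> QPSK_axis_diffs" if "c \<in> C" for c
    using diff[OF that, of j0] diff[OF that assms(2)] assms(1,3) by (intro QPSK_diff_mult_non_unit) simp_all
  then show "\<exists>j. c * v $ j \<in> QPSK_diag_diffs" if "c \<in> C" for c
    using that assms(1) by (metis mult.right_neutral)
  \<comment> \<open>The squared norm of the ratio, 2 or 1/2, fixes the class of every multiplier in C.\<close>
  have norms: "(norm (c * v $ j1))\<^sup>2 = (norm c)\<^sup>2 * (norm (v $ j1))\<^sup>2" for c
    by (simp add: norm_mult power_mult_distrib)
  obtain E where E: "E \<in> {QPSK_axis_diffs, QPSK_diag_diffs}" "C \<subseteq> E"
  proof (cases "(norm (v $ j1))\<^sup>2 = 2")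
    case True
    then have "C \<subseteq> QPSK_axis_diffs"
      using classes norms norm_QPSK_axis_diff norm_QPSK_diag_diff by force
    then show ?thesis
      using that by blast
  next
    case False
    then have "C \<subseteq> QPSK_diag_diffs"
      using classes norms norm_QPSK_axis_diff norm_QPSK_diag_diff by force
    then show ?thesis
      using that by blast
  qed
  moreover have "finite E" "card E \<le> 4"
    using E(1) finite_QPSK_axis_diffs finite_QPSK_diag_diffs card_QPSK_axis_diffs card_QPSK_diag_diffs
    by auto
  ultimately show "finite C" "card C \<le> 4"
    using finite_subset card_mono[of E C] by auto
qed

lemma card_confusable_rows_misaligned:
  fixes v :: "complex^'d"
  assumes "v $ j0 = 1" "v $ j1 \<noteq> 0" "v $ j1 \<notin> gauss_units"
  shows "card {r \<in> QPSK_vectors. confusable_row v r} \<le> 2 * (4 ^ (CARD('d) - l0 v) * 2 ^ l0 v)"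
proof -
  define C where "C = {c. c \<noteq> 0 \<and> QPSK_shift_set (c *s v) \<noteq> {}}"
  define X :: nat where "X = 4 ^ (CARD('d) - l0 v) * 2 ^ l0 v"
  note multipliers = misaligned_shift_multipliers[OF assms, folded C_def]
  have shift_bound: "2 * card (QPSK_shift_set (c *s v)) \<le> X" if c: "c \<in> C" for c
  proof -
    obtain j' where diag: "c * v $ j' \<in> QPSK_diag_diffs"
      using multipliers(3)[OF c] by blast
    have "Re ((c *s v) $ j') \<noteq> 0" "Im ((c *s v) $ j') \<noteq> 0"
      using QPSK_diag_diff_Re_Im_nonzero[OF diag] by simp_all
    then show ?thesis
      using card_QPSK_shift_set_le l0_smult[of c v] c by (fastforce simp: X_def C_def)
  qed
  have "{r \<in> QPSK_vectors. confusable_row v r} = (\<Union>c \<in> C. QPSK_shift_set (c *s v))"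
    unfolding confusable_rows_eq_Union by (auto simp: C_def)
  then have "2 * card {r \<in> QPSK_vectors. confusable_row v r} \<le> 2 * (\<Sum>c \<in> C. card (QPSK_shift_set (c *s v)))"
    using card_UN_le[OF multipliers(1)] by simp
  also have "\<dots> = (\<Sum>c \<in> C. 2 * card (QPSK_shift_set (c *s v)))"
    by (simp add: sum_distrib_left)
  also have "\<dots> \<le> card C * X"
    using sum_bounded_above[of C _ X] shift_bound by simp
  also have "\<dots> \<le> 4 * X"
    using multipliers(2) by simp
  finally show ?thesis
    unfolding X_def[symmetric] by linarith
qed

lemma card_confusable_rows_le:
  fixes w :: "complex^'d"
  assumes "w \<noteq> 0"
  shows "card {r \<in> QPSK_vectors. confusable_row w r} \<le> 4 ^ (CARD('d) - l0 w) * (4 * 2 ^ l0 w - 4)"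
proof -
  obtain j0 where j0: "w $ j0 \<noteq> 0"
    using assms by (auto simp: vec_eq_iff)
  define v where "v = (1 / w $ j0) *s w"
  have v: "v $ j0 = 1" "v \<noteq> 0" "l0 v = l0 w" "confusable_row v = confusable_row w"
    using j0 l0_smult[of "1 / w $ j0" w] confusable_row_smult[of "1 / w $ j0" w]
    by (auto simp: v_def vec_eq_iff)
  show ?thesis
  proof (cases "\<forall>j. v $ j \<noteq> 0 \<longrightarrow> v $ j \<in> gauss_units")
    case True
    then show ?thesis
      using card_confusable_rows_aligned[OF v(2)] v by simp
  next
    case False
    then obtain j1 where "v $ j1 \<noteq> 0" "v $ j1 \<notin> gauss_units"
      by blast
    then have "card {r \<in> QPSK_vectors. confusable_row w r} \<le> 4 ^ (CARD('d) - l0 w) * (2 * 2 ^ l0 w)"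
      using card_confusable_rows_misaligned[OF v(1)] v by (simp add: ac_simps)
    also have "\<dots> \<le> 4 ^ (CARD('d) - l0 w) * (4 * 2 ^ l0 w - 4)"
    proof -
      have "2 ^ 1 \<le> (2::nat) ^ l0 w"
        using l0_pos[OF assms] by (intro power_increasing) auto
      then show ?thesis
        by (intro mult_le_mono2) simp
    qed
    finally show ?thesis .
  qed
qed

lemma confusable_row_fraction_le:
  fixes w :: "complex^'d"
  assumes "w \<noteq> 0"
  shows "real (card {r \<in> QPSK_vectors. confusable_row w r}) / real (card (QPSK_vectors :: (complex^'d) set))
    \<le> (2 ^ l0 w - 1) / 4 ^ (l0 w - 1)"
proof -
  define k where "k = l0 w"
  define H :: real where "H = 4 ^ (CARD('d) - k)"
  have k: "0 < k" "k \<le> CARD('d)"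
    using l0_pos[OF assms] l0_le_CARD[of w] by (simp_all add: k_def)
  have "real (card {r \<in> QPSK_vectors. confusable_row w r}) \<le> real (4 ^ (CARD('d) - k) * (4 * 2 ^ k - 4))"
    using card_confusable_rows_le[OF assms] by (simp only: k_def of_nat_le_iff)
  also have "\<dots> = H * 4 * (2 ^ k - 1)"
    using one_le_power[of "2::nat" k] by (simp add: H_def of_nat_diff algebra_simps)
  finally have bad: "real (card {r \<in> QPSK_vectors. confusable_row w r}) \<le> H * 4 * (2 ^ k - 1)" .
  have "real (card (QPSK_vectors :: (complex^'d) set)) = 4 ^ ((CARD('d) - k) + 1 + (k - 1))"
    using k by (simp add: card_QPSK_vectors)
  also have "\<dots> = H * 4 * 4 ^ (k - 1)"
    by (simp add: H_def power_add)
  finally have total: "real (card (QPSK_vectors :: (complex^'d) set)) = H * 4 * 4 ^ (k - 1)" .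
  have "H > 0"
    by (simp add: H_def)
  have "real (card {r \<in> QPSK_vectors. confusable_row w r}) / (H * 4 * 4 ^ (k - 1))
      \<le> H * 4 * (2 ^ k - 1) / (H * 4 * 4 ^ (k - 1))"
    using bad \<open>H > 0\<close> by (intro divide_right_mono) simp_all
  also have "\<dots> = (2 ^ k - 1) / 4 ^ (k - 1)"
    using \<open>H > 0\<close> by simp
  finally show ?thesis
    unfolding total k_def .
qed

lemma two_pow_minus_one_div_four_pow_le_1:
  assumes "0 < k"
  shows "(2 ^ k - 1) / 4 ^ (k - 1) \<le> (1::real)"
proof -
  define m :: real where "m = 2 ^ (k - 1)"
  have "(2::real) ^ k = 2 * m" "(4::real) ^ (k - 1) = m * m"
    using assms by (simp_all add: m_def power_mult_distrib[symmetric] power_Suc[symmetric])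
  moreover have "0 \<le> (m - 1)\<^sup>2"
    by simp
  ultimately show ?thesis
    by (simp add: m_def divide_le_eq power2_eq_square algebra_simps)
qed

section \<open>Eclipsing\<close>

lemma stack_row_rank_le_1_imp_multiple:
  fixes M :: "complex^'d^'u"
  assumes "w \<noteq> 0" "rank (stack_row M w) \<le> 1"
  shows "\<exists>c. M $ u = c *s w"
proof (rule ccontr)
  assume not_multiple: "\<nexists>c. M $ u = c *s w"
  then have "M $ u \<notin> vec.span {w}"
    by (auto simp: vec.span_singleton)
  then have independent: "vec.independent {M $ u, w}"
    using assms(1) by (simp add: vec.independent_insertI)
  from not_multiple have "M $ u \<noteq> 1 *s w"
    by blast
  then have distinct: "M $ u \<noteq> w"
    by simp
  have "{M $ u, w} = {row (Some u) (stack_row M w), row None (stack_row M w)}"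
    by (simp add: row_def stack_row_def vec_eq_iff)
  also have "\<dots> \<subseteq> rows (stack_row M w)"
    by (auto simp: rows_def)
  finally have "card {M $ u, w} \<le> rank (stack_row M w)"
    unfolding row_rank_def_gen using independent by (rule vec.independent_card_le_dim)
  with distinct assms(2) show False
    by simp
qed

lemma QPSK_matrices_eq: "QPSK_matrices = {S. \<forall>u. S $ u \<in> QPSK_vectors}"
  by (simp add: QPSK_matrices_def QPSK_vectors_def)

lemma finite_QPSK_matrices: "finite QPSK_matrices"
  unfolding QPSK_matrices_eq using finite_QPSK_vectors by (rule finite_vectors)

lemma eclipsed_imp_confusable_row:
  fixes w :: "complex^'d" and S :: "complex^'d^'u"
  assumes "w \<noteq> 0" "eclipsed S w"
  shows "\<exists>u. confusable_row w (S $ u)"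
proof -
  obtain S' where S': "S' \<in> QPSK_matrices" "S' \<noteq> S" "rank (stack_row (S - S') w) \<le> 1"
    using assms(2) by (auto simp: eclipsed_def)
  then obtain u where "S $ u \<noteq> S' $ u"
    by (metis vec_eq_iff)
  obtain c where "(S - S') $ u = c *s w"
    using stack_row_rank_le_1_imp_multiple[OF assms(1) S'(3)] by blast
  then have "c *s w = S $ u - S' $ u"
    by simp
  then have "S $ u - c *s w = S' $ u" and "c \<noteq> 0"
    using \<open>S $ u \<noteq> S' $ u\<close> by auto
  with S'(1) show ?thesis
    unfolding confusable_row_def QPSK_matrices_eq by (metis mem_Collect_eq)
qed

lemma eclipsed_fraction_le:
  fixes w :: "complex^'d"
  assumes "w \<noteq> 0"
  shows "real (card {S \<in> (QPSK_matrices :: (complex^'d^'u) set). eclipsed S w})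
      / real (card (QPSK_matrices :: (complex^'d^'u) set))
    \<le> 1 - (1 - real (card {r \<in> QPSK_vectors. confusable_row w r})
      / real (card (QPSK_vectors :: (complex^'d) set))) ^ CARD('u)"
proof -
  let ?confusable = "{S :: complex^'d^'u. (\<forall>u. S $ u \<in> QPSK_vectors) \<and> (\<exists>u. confusable_row w (S $ u))}"
  have "{S \<in> (QPSK_matrices :: (complex^'d^'u) set). eclipsed S w} \<subseteq> ?confusable"
    using eclipsed_imp_confusable_row[OF assms] by (auto simp: QPSK_matrices_eq)
  then have "card {S \<in> (QPSK_matrices :: (complex^'d^'u) set). eclipsed S w} \<le> card ?confusable"
    by (intro card_mono[OF finite_subset[OF _ finite_QPSK_matrices]]) (auto simp: QPSK_matrices_eq)
  moreover have "card (QPSK_matrices :: (complex^'d^'u) set) = card (QPSK_vectors :: (complex^'d) set) ^ CARD('u)"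
    by (simp add: QPSK_matrices_eq card_vectors)
  ultimately have "real (card {S \<in> (QPSK_matrices :: (complex^'d^'u) set). eclipsed S w})
      / real (card (QPSK_matrices :: (complex^'d^'u) set))
    \<le> real (card ?confusable) / real (card (QPSK_vectors :: (complex^'d) set) ^ CARD('u))"
    by (simp add: divide_right_mono)
  also have "\<dots> = 1 - (1 - real (card {r \<in> QPSK_vectors. confusable_row w r})
      / real (card (QPSK_vectors :: (complex^'d) set))) ^ CARD('u)"
  proof (rule fraction_vectors_with_component[OF finite_QPSK_vectors])
    show "(QPSK_vectors :: (complex^'d) set) \<noteq> {}"
      using card_QPSK_vectors[where 'd = 'd] by (metis card.empty power_not_zero zero_neq_numeral)
  qed
  finally show ?thesis .
qed

theorem theorem2:
  fixes w :: "complex^'d"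
  shows "real (card {S \<in> (QPSK_matrices :: (complex^'d^'u) set). eclipsed S w})
           / real (card (QPSK_matrices :: (complex^'d^'u) set))
         \<le> p_e CARD('u) w"
proof (cases "w = 0")
  case True
  have "card {S \<in> (QPSK_matrices :: (complex^'d^'u) set). eclipsed S w} \<le> card (QPSK_matrices :: (complex^'d^'u) set)"
    using finite_QPSK_matrices by (intro card_mono) auto
  then show ?thesis
    using True by (auto simp: p_e_def divide_le_eq_1)
next
  case False
  define p_row where "p_row = real (card {r \<in> QPSK_vectors. confusable_row w r})
    / real (card (QPSK_vectors :: (complex^'d) set))"
  have "real (card {S \<in> (QPSK_matrices :: (complex^'d^'u) set). eclipsed S w})
      / real (card (QPSK_matrices :: (complex^'d^'u) set)) \<le> 1 - (1 - p_row) ^ CARD('u)"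
    unfolding p_row_def using False by (rule eclipsed_fraction_le)
  also have "\<dots> \<le> 1 - (1 - (2 ^ l0 w - 1) / 4 ^ (l0 w - 1)) ^ CARD('u)"
    using confusable_row_fraction_le[OF False] two_pow_minus_one_div_four_pow_le_1[OF l0_pos[OF False]]
    by (simp add: p_row_def power_mono)
  finally show ?thesis
    using False by (simp add: p_e_def)
qed

end
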